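(* Let $f(x_1,x_2)=(-2+x_1+x_2)^2$ and $g(x_1,x_2)=1-x_1^2-x_2^2$; the global minimum of $f$ on $\{x\in\mathbb{R}^2: g(x)\geqslant 0\}$ is $2(3-2\sqrt{2})$. For every integer $d\geqslant 1$, the order-$d$ SDSOS (dual) relaxation $$\sup_{\lambda,\sigma_0,\sigma_1} \lambda \quad\text{s.t.}\quad f-\lambda=\sigma_0+\sigma_1 g,\ \lambda\in\mathbb{R},\ \sigma_0\in \mathrm{SDSOS}_d,\ \sigma_1\in\mathrm{SDSOS}_{d-1},$$ and the corresponding relaxed moment (primal) problem $$\inf_y L_y(f)\quad\text{s.t.}\quad y_0=1,\ \text{every principal submatrix of size at most }2\text{ of } M_d(y) \text{ and of } M_{d-1}(gy)\text{ is positive semidefinite},$$ both have optimal value $4(1-\sqrt{2})$, which is strictly smaller than the global minimum $2(3-2\sqrt{2})$ (the gap equals $2$).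
   Context: For $\alpha\in\mathbb{N}^2$ write $x^\alpha=x_1^{\alpha_1}x_2^{\alpha_2}$ and $|\alpha|=\alpha_1+\alpha_2$. $\mathrm{SDSOS}_d$ denotes the set of polynomials of the form $\sum_k (p_k x^{\alpha(k)}+q_k x^{\beta(k)})^2$ (finite sum) with $p_k,q_k\in\mathbb{R}$ and $\alpha(k),\beta(k)\in\mathbb{N}^2$, $|\alpha(k)|,|\beta(k)|\leqslant d$ (scaled diagonally-dominant sums of squares). For $y=(y_\alpha)_{|\alpha|\leqslant 2d}$ and $p=\sum_\alpha p_\alpha x^\alpha$, $L_y(p)=\sum_\alpha p_\alpha y_\alpha$; $M_d(y)=(y_{\alpha+\beta})_{|\alpha|,|\beta|\leqslant d}$; $M_{d-1}(gy)=(y_{\alpha+\beta}-y_{\alpha+\beta+(2,0)}-y_{\alpha+\beta+(0,2)})_{|\alpha|,|\beta|\leqslant d-1}$. *)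

theory Defs
  imports Main "HOL-Library.Product_Plus"
    Complex_Main
begin

definition mdeg :: "nat \<times> nat \<Rightarrow> nat" where
  "mdeg \<alpha> = fst \<alpha> + snd \<alpha>"

definition madd :: "nat \<times> nat \<Rightarrow> nat \<times> nat \<Rightarrow> nat \<times> nat" where
  "madd \<alpha> \<beta> = (fst \<alpha> + fst \<beta>, snd \<alpha> + snd \<beta>)"

definition mono :: "nat \<times> nat \<Rightarrow> real \<times> real \<Rightarrow> real" where
  "mono \<alpha> x = fst x ^ fst \<alpha> * snd x ^ snd \<alpha>"

definition f :: "real \<times> real \<Rightarrow> real" where
  "f x = (-2 + fst x + snd x)^2"

definition g :: "real \<times> real \<Rightarrow> real" where
  "g x = 1 - (fst x)^2 - (snd x)^2"

text \<open>Coefficients of f = 4 - 4 x1 - 4 x2 + x1^2 + 2 x1 x2 + x2^2.\<close>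
definition f_coef :: "nat \<times> nat \<Rightarrow> real" where
  "f_coef \<alpha> =
    (if \<alpha> = (0,0) then 4
     else if \<alpha> = (1,0) then -4
     else if \<alpha> = (0,1) then -4
     else if \<alpha> = (2,0) then 1
     else if \<alpha> = (1,1) then 2
     else if \<alpha> = (0,2) then 1
     else 0)"

lemma f_coef_correct: "f x = (\<Sum>\<alpha>\<in>{\<alpha>. f_coef \<alpha> \<noteq> 0}. f_coef \<alpha> * mono \<alpha> x)"
proof -
  have S: "{\<alpha>. f_coef \<alpha> \<noteq> 0} = {(0,0),(1,0),(0,1),(2,0),(1,1),(0,2)}"
    by (auto simp: f_coef_def split: if_splits)
  have "(\<Sum>\<alpha>\<in>{\<alpha>. f_coef \<alpha> \<noteq> 0}. f_coef \<alpha> * mono \<alpha> x)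
      = (\<Sum>\<alpha>\<in>{(0,0),(1,0),(0,1),(2,0),(1,1),(0,2)}. f_coef \<alpha> * mono \<alpha> x)"
    by (simp only: S)
  also have "\<dots> = f x"
    by (simp add: f_coef_def mono_def f_def power2_eq_square algebra_simps)
  finally show ?thesis by simp
qed

definition SDSOS :: "nat \<Rightarrow> (real \<times> real \<Rightarrow> real) set" where
  "SDSOS d = {\<sigma>. \<exists>ts :: (real \<times> real \<times> (nat \<times> nat) \<times> (nat \<times> nat)) list.
      (\<forall>(p, q, \<alpha>, \<beta>) \<in> set ts. mdeg \<alpha> \<le> d \<and> mdeg \<beta> \<le> d) \<and>
      (\<forall>x. \<sigma> x = (\<Sum>(p, q, \<alpha>, \<beta>) \<leftarrow> ts. (p * mono \<alpha> x + q * mono \<beta> x)^2))}"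

definition Ly :: "(nat \<times> nat \<Rightarrow> real) \<Rightarrow> (nat \<times> nat \<Rightarrow> real) \<Rightarrow> real" where
  "Ly y p = (\<Sum>\<alpha>\<in>{\<alpha>. p \<alpha> \<noteq> 0}. p \<alpha> * y \<alpha>)"

definition psd_on :: "'i set \<Rightarrow> ('i \<Rightarrow> 'i \<Rightarrow> real) \<Rightarrow> bool" where
  "psd_on J M \<longleftrightarrow> (\<forall>v :: 'i \<Rightarrow> real. 0 \<le> (\<Sum>i\<in>J. \<Sum>j\<in>J. v i * M i j * v j))"

definition psd_principal_le2 :: "'i set \<Rightarrow> ('i \<Rightarrow> 'i \<Rightarrow> real) \<Rightarrow> bool" where
  "psd_principal_le2 I M \<longleftrightarrow> (\<forall>J. J \<subseteq> I \<and> finite J \<and> card J \<le> 2 \<longrightarrow> psd_on J M)"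

definition idx :: "nat \<Rightarrow> (nat \<times> nat) set" where
  "idx d = {\<alpha>. mdeg \<alpha> \<le> d}"

text \<open>Moment matrix M_d(y) and localizing matrix M_{d-1}(g y) (as entry functions; the
  index set is idx d, resp. idx (d-1)).\<close>
definition moment_mat :: "(nat \<times> nat \<Rightarrow> real) \<Rightarrow> nat \<times> nat \<Rightarrow> nat \<times> nat \<Rightarrow> real" where
  "moment_mat y \<alpha> \<beta> = y (madd \<alpha> \<beta>)"

definition loc_mat :: "(nat \<times> nat \<Rightarrow> real) \<Rightarrow> nat \<times> nat \<Rightarrow> nat \<times> nat \<Rightarrow> real" where
  "loc_mat y \<alpha> \<beta> = y (madd \<alpha> \<beta>) - y (madd (madd \<alpha> \<beta>) (2,0)) - y (madd (madd \<alpha> \<beta>) (0,2))"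

definition sdsos_feasible :: "nat \<Rightarrow> real set" where
  "sdsos_feasible d = {lam. \<exists>\<sigma>0 \<sigma>1. \<sigma>0 \<in> SDSOS d \<and> \<sigma>1 \<in> SDSOS (d - 1) \<and>
        (\<forall>x. f x - lam = \<sigma>0 x + \<sigma>1 x * g x)}"

text \<open>Objective values of feasible points of the relaxed moment (primal) problem.
  Only the entries y_alpha with |alpha| <= 2d are used.\<close>
definition moment_feasible :: "nat \<Rightarrow> real set" where
  "moment_feasible d = {Ly y f_coef | y. y (0,0) = 1 \<and>
        psd_principal_le2 (idx d) (moment_mat y) \<and>
        psd_principal_le2 (idx (d - 1)) (loc_mat y)}"

end

theory Submission
  imports Defs
begin

text \<open>On the disc \<open>x\<^sub>1 + x\<^sub>2 \<le> \<surd>2\<close>, so \<open>f \<ge> (2 - \<surd>2)\<^sup>2\<close>, attained at \<open>(s, s)\<close> with \<open>s = \<surd>2/2\<close>.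
  Both relaxations are governed by the functional
  \<open>L h = (h(s,s) + h(-s,s) + h(s,-s) - h(-s,-s))/2\<close>, whose moments are
  \<open>y\<^sub>\<gamma> = (-1)\<^bsup>\<gamma>\<^sub>1\<gamma>\<^sub>2\<^esup> s\<^bsup>|\<gamma>|\<^esup>\<close>. The four points lie on the circle \<open>g = 0\<close>, so \<open>L\<close> kills multiples
  of \<open>g\<close>; on a binomial square \<open>(p x\<^sup>\<alpha> + q x\<^sup>\<beta>)\<^sup>2\<close> it equals \<open>(p s\<^bsup>|\<alpha>|\<^esup> \<plusminus> q s\<^bsup>|\<beta>|\<^esup>)\<^sup>2 \<ge> 0\<close>.
  Applying \<open>L\<close> to a certificate \<open>f - \<lambda> = \<sigma>\<^sub>0 + \<sigma>\<^sub>1 g\<close> bounds \<open>\<lambda>\<close> by \<open>L f = 4(1 - \<surd>2)\<close>; dually, \<open>y\<close> is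
  feasible for the moment problem, as its moment matrix has entries \<open>\<plusminus>s\<^bsup>|\<alpha>|\<^esup>s\<^bsup>|\<beta>|\<^esup>\<close> and its
  localizing matrix vanishes. The value is attained in the SDSOS problem by
  \<open>f - 4(1 - \<surd>2) = (x\<^sub>1 + x\<^sub>2)\<^sup>2 + 2\<surd>2((x\<^sub>1 - s)\<^sup>2 + (x\<^sub>2 - s)\<^sup>2) + 2\<surd>2 g\<close>, and in the moment problem it is a
  lower bound because the \<open>2 \<times> 2\<close> minors give \<open>y\<^sub>1\<^sub>0\<^sup>2 \<le> y\<^sub>2\<^sub>0\<close>, \<open>y\<^sub>0\<^sub>1\<^sup>2 \<le> y\<^sub>0\<^sub>2\<close>,
  \<open>y\<^sub>2\<^sub>0 + 2y\<^sub>1\<^sub>1 + y\<^sub>0\<^sub>2 \<ge> 0\<close> and the localizing entry gives \<open>y\<^sub>2\<^sub>0 + y\<^sub>0\<^sub>2 \<le> 1\<close>, whence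
  \<open>y\<^sub>1\<^sub>0 + y\<^sub>0\<^sub>1 \<le> \<surd>2\<close> as for the true minimum.\<close>

lemma add_le_sqrt2_if_sum_squares_le_1:
  fixes a b :: real
  assumes "a\<^sup>2 + b\<^sup>2 \<le> 1"
  shows "a + b \<le> sqrt 2"
proof (rule real_le_rsqrt)
  have "(a + b)\<^sup>2 = 2 * (a\<^sup>2 + b\<^sup>2) - (a - b)\<^sup>2"
    by (simp add: power2_eq_square algebra_simps)
  with assms show "(a + b)\<^sup>2 \<le> 2"
    by (smt (verit) zero_le_power2)
qed

lemma f_ge_on_disc:
  assumes "0 \<le> g x"
  shows "2 * (3 - 2 * sqrt 2) \<le> f x"
proof -
  obtain a b where x: "x = (a, b)" by fastforce
  have "a + b \<le> sqrt 2"
    using assms by (intro add_le_sqrt2_if_sum_squares_le_1) (simp add: g_def x)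
  then have "(2 - sqrt 2)\<^sup>2 \<le> (2 - (a + b))\<^sup>2"
    using sqrt2_less_2 by (intro power_mono) auto
  then show ?thesis
    by (simp add: f_def x power2_diff power2_commute algebra_simps)
qed

definition half_sqrt2 :: real where
  "half_sqrt2 = sqrt 2 / 2"

lemma half_sqrt2_sq: "half_sqrt2\<^sup>2 = 1 / 2"
  by (simp add: half_sqrt2_def power_divide)

lemma g_half_sqrt2_signs:
  "g (half_sqrt2, half_sqrt2) = 0" "g (- half_sqrt2, half_sqrt2) = 0"
  "g (half_sqrt2, - half_sqrt2) = 0" "g (- half_sqrt2, - half_sqrt2) = 0"
  by (simp_all add: g_def half_sqrt2_sq)

lemma f_half_sqrt2: "f (half_sqrt2, half_sqrt2) = 2 * (3 - 2 * sqrt 2)"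
  by (simp add: f_def half_sqrt2_def power2_eq_square algebra_simps)

text \<open>The negative weight at \<open>(-s, -s)\<close> is what lets these pseudo-moments go below the true
  minimum: no measure has them.\<close>

definition pseudo_moment :: "nat \<times> nat \<Rightarrow> real" where
  "pseudo_moment \<gamma> = (-1) ^ (fst \<gamma> * snd \<gamma>) * half_sqrt2 ^ mdeg \<gamma>"

definition circle_functional :: "(real \<times> real \<Rightarrow> real) \<Rightarrow> real" where
  "circle_functional h =
     (h (half_sqrt2, half_sqrt2) + h (- half_sqrt2, half_sqrt2)
      + h (half_sqrt2, - half_sqrt2) - h (- half_sqrt2, - half_sqrt2)) / 2"

lemma circle_functional_add:
  "circle_functional (\<lambda>x. h x + k x) = circle_functional h + circle_functional k"
  by (simp add: circle_functional_def field_simps)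

lemma circle_functional_mult:
  "circle_functional (\<lambda>x. c * h x) = c * circle_functional h"
  by (simp add: circle_functional_def field_simps)

lemma circle_functional_const: "circle_functional (\<lambda>x. c) = c"
  by (simp add: circle_functional_def)

lemma circle_functional_times_g: "circle_functional (\<lambda>x. h x * g x) = 0"
  by (simp add: circle_functional_def g_half_sqrt2_signs)

lemma neg_one_power_mult:
  "((-1) :: real) ^ (a * b) = (1 + (-1) ^ a + (-1) ^ b - (-1) ^ a * (-1) ^ b) / 2"
  by (cases "even a"; cases "even b") simp_all

lemma circle_functional_mono: "circle_functional (mono \<gamma>) = pseudo_moment \<gamma>"
proof -
  obtain a b where \<gamma>: "\<gamma> = (a, b)" by fastforce
  have neg: "(- half_sqrt2) ^ n = (-1) ^ n * half_sqrt2 ^ n" for n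
    by (rule power_minus)
  show ?thesis
    unfolding circle_functional_def pseudo_moment_def mono_def mdeg_def \<gamma> neg_one_power_mult
    by (simp add: neg power_add field_simps)
qed

lemma mono_madd: "mono (madd \<alpha> \<beta>) x = mono \<alpha> x * mono \<beta> x"
  by (simp add: mono_def madd_def power_add)

lemma pseudo_moment_madd:
  "pseudo_moment (madd \<alpha> \<beta>) =
     (-1) ^ ((fst \<alpha> + fst \<beta>) * (snd \<alpha> + snd \<beta>)) * half_sqrt2 ^ mdeg \<alpha> * half_sqrt2 ^ mdeg \<beta>"
  by (simp add: pseudo_moment_def madd_def mdeg_def power_add)

lemma pseudo_moment_madd_self: "pseudo_moment (madd \<alpha> \<alpha>) = (half_sqrt2 ^ mdeg \<alpha>)\<^sup>2"
proof -
  have "(fst \<alpha> + fst \<alpha>) * (snd \<alpha> + snd \<alpha>) = 2 * (2 * fst \<alpha> * snd \<alpha>)"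
    by (simp add: algebra_simps)
  then show ?thesis
    unfolding pseudo_moment_madd by (simp only: power_mult) (simp add: power2_eq_square)
qed

lemma neg_one_power_squared: "(((-1) :: real) ^ n)\<^sup>2 = 1"
  by (simp add: power_mult[symmetric])

lemma circle_functional_binomial_square_nonneg:
  "0 \<le> circle_functional (\<lambda>x. (p * mono \<alpha> x + q * mono \<beta> x)\<^sup>2)"
proof -
  define a where "a = half_sqrt2 ^ mdeg \<alpha>"
  define b where "b = half_sqrt2 ^ mdeg \<beta>"
  define e :: real where "e = (-1) ^ ((fst \<alpha> + fst \<beta>) * (snd \<alpha> + snd \<beta>))"
  have "(\<lambda>x. (p * mono \<alpha> x + q * mono \<beta> x)\<^sup>2) =
      (\<lambda>x. p\<^sup>2 * mono (madd \<alpha> \<alpha>) x + (2 * p * q * mono (madd \<alpha> \<beta>) x + q\<^sup>2 * mono (madd \<beta> \<beta>) x))"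
    by (simp add: mono_madd power2_eq_square algebra_simps)
  then have "circle_functional (\<lambda>x. (p * mono \<alpha> x + q * mono \<beta> x)\<^sup>2) =
      p\<^sup>2 * a\<^sup>2 + 2 * p * q * (e * a * b) + q\<^sup>2 * b\<^sup>2"
    by (simp add: circle_functional_add circle_functional_mult circle_functional_mono
        pseudo_moment_madd_self pseudo_moment_madd a_def b_def e_def)
  also have "\<dots> = (p * a + e * q * b)\<^sup>2"
    using neg_one_power_squared[of "(fst \<alpha> + fst \<beta>) * (snd \<alpha> + snd \<beta>)"]
    by (simp add: e_def power2_eq_square algebra_simps)
  finally show ?thesis by simp
qed

lemma circle_functional_sum_list:
  "circle_functional (\<lambda>x. \<Sum>t\<leftarrow>ts. h t x) = (\<Sum>t\<leftarrow>ts. circle_functional (h t))"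
  by (induction ts) (simp_all add: circle_functional_const circle_functional_add)

lemma circle_functional_SDSOS_nonneg:
  assumes "\<sigma> \<in> SDSOS d"
  shows "0 \<le> circle_functional \<sigma>"
proof -
  obtain ts :: "(real \<times> real \<times> (nat \<times> nat) \<times> (nat \<times> nat)) list" where
    "\<And>x. \<sigma> x = (\<Sum>(p, q, \<alpha>, \<beta>)\<leftarrow>ts. (p * mono \<alpha> x + q * mono \<beta> x)\<^sup>2)"
    using assms unfolding SDSOS_def by blast
  then have "\<sigma> = (\<lambda>x. \<Sum>t\<leftarrow>ts. (\<lambda>(p, q, \<alpha>, \<beta>) x. (p * mono \<alpha> x + q * mono \<beta> x)\<^sup>2) t x)"
    by (auto simp: split_def)
  then show ?thesis
    by (simp add: circle_functional_sum_list split_def)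
      (auto intro!: sum_list_nonneg circle_functional_binomial_square_nonneg)
qed

lemma sdsos_feasible_le:
  assumes "lam \<in> sdsos_feasible d"
  shows "lam \<le> 4 * (1 - sqrt 2)"
proof -
  obtain \<sigma>0 \<sigma>1 where \<sigma>0: "\<sigma>0 \<in> SDSOS d"
    and cert: "\<And>x. f x - lam = \<sigma>0 x + \<sigma>1 x * g x"
    using assms unfolding sdsos_feasible_def by blast
  have "circle_functional (\<lambda>x. f x - lam) = circle_functional \<sigma>0"
    using cert circle_functional_add[of \<sigma>0 "\<lambda>x. \<sigma>1 x * g x"]
    by (simp add: circle_functional_times_g)
  moreover have "circle_functional (\<lambda>x. f x - lam) = 4 * (1 - sqrt 2) - lam"
    by (simp add: circle_functional_def f_def half_sqrt2_def power2_eq_square field_simps)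
  ultimately show ?thesis
    using circle_functional_SDSOS_nonneg[OF \<sigma>0] by linarith
qed

lemma binomial_square_in_SDSOS:
  assumes "mdeg \<alpha> \<le> d" "mdeg \<beta> \<le> d"
  shows "(\<lambda>x. (p * mono \<alpha> x + q * mono \<beta> x)\<^sup>2) \<in> SDSOS d"
  unfolding SDSOS_def using assms by (intro CollectI exI[of _ "[(p, q, \<alpha>, \<beta>)]"]) auto

lemma SDSOS_add:
  assumes "\<sigma> \<in> SDSOS d" "\<tau> \<in> SDSOS d"
  shows "(\<lambda>x. \<sigma> x + \<tau> x) \<in> SDSOS d"
proof -
  obtain ts us :: "(real \<times> real \<times> (nat \<times> nat) \<times> (nat \<times> nat)) list" where
    "\<forall>(p, q, \<alpha>, \<beta>) \<in> set ts. mdeg \<alpha> \<le> d \<and> mdeg \<beta> \<le> d"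
    "\<forall>x. \<sigma> x = (\<Sum>(p, q, \<alpha>, \<beta>)\<leftarrow>ts. (p * mono \<alpha> x + q * mono \<beta> x)\<^sup>2)"
    "\<forall>(p, q, \<alpha>, \<beta>) \<in> set us. mdeg \<alpha> \<le> d \<and> mdeg \<beta> \<le> d"
    "\<forall>x. \<tau> x = (\<Sum>(p, q, \<alpha>, \<beta>)\<leftarrow>us. (p * mono \<alpha> x + q * mono \<beta> x)\<^sup>2)"
    using assms unfolding SDSOS_def by blast
  then show ?thesis
    unfolding SDSOS_def by (intro CollectI exI[of _ "ts @ us"]) auto
qed

lemma f_minus_relaxation_value:
  "f x - 4 * (1 - sqrt 2) =
     (fst x + snd x)\<^sup>2 + 2 * sqrt 2 * ((fst x - half_sqrt2)\<^sup>2 + (snd x - half_sqrt2)\<^sup>2)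
     + 2 * sqrt 2 * g x"
proof -
  have "sqrt 2 * sqrt 2 = 2" by simp
  then show ?thesis
    by (simp add: f_def g_def half_sqrt2_def power2_eq_square field_simps)
qed

lemma relaxation_value_in_sdsos_feasible:
  assumes "1 \<le> d"
  shows "4 * (1 - sqrt 2) \<in> sdsos_feasible d"
proof -
  define k where "k = sqrt (2 * sqrt 2)"
  have k_sq: "k\<^sup>2 = 2 * sqrt 2" by (simp add: k_def)
  have k_term: "(k * a + (- k * half_sqrt2) * 1)\<^sup>2 = 2 * sqrt 2 * (a - half_sqrt2)\<^sup>2" for a
  proof -
    have "(k * a + (- k * half_sqrt2) * 1)\<^sup>2 = k\<^sup>2 * (a - half_sqrt2)\<^sup>2"
      by (simp add: power_mult_distrib[symmetric] algebra_simps)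
    then show ?thesis by (simp add: k_sq)
  qed
  define \<sigma>0 where "\<sigma>0 x = (1 * mono (1, 0) x + 1 * mono (0, 1) x)\<^sup>2
      + ((k * mono (1, 0) x + (- k * half_sqrt2) * mono (0, 0) x)\<^sup>2
      + (k * mono (0, 1) x + (- k * half_sqrt2) * mono (0, 0) x)\<^sup>2)" for x
  define \<sigma>1 :: "real \<times> real \<Rightarrow> real" where "\<sigma>1 x = (k * mono (0, 0) x + 0 * mono (0, 0) x)\<^sup>2" for x
  have "\<sigma>0 \<in> SDSOS d"
    unfolding \<sigma>0_def using assms
    by (intro SDSOS_add binomial_square_in_SDSOS) (auto simp: mdeg_def)
  moreover have "\<sigma>1 \<in> SDSOS (d - 1)"
    unfolding \<sigma>1_def by (intro binomial_square_in_SDSOS) (auto simp: mdeg_def)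
  moreover have "f x - 4 * (1 - sqrt 2) = \<sigma>0 x + \<sigma>1 x * g x" for x
    unfolding f_minus_relaxation_value \<sigma>0_def \<sigma>1_def
    using k_term[of "fst x"] k_term[of "snd x"] by (simp add: mono_def k_sq algebra_simps)
  ultimately show ?thesis
    unfolding sdsos_feasible_def by blast
qed

lemma Ly_f_coef:
  "Ly y f_coef = 4 * y (0, 0) - 4 * y (1, 0) - 4 * y (0, 1) + y (2, 0) + 2 * y (1, 1) + y (0, 2)"
proof -
  have "{\<alpha>. f_coef \<alpha> \<noteq> 0} = {(0, 0), (1, 0), (0, 1), (2, 0), (1, 1), (0, 2)}"
    by (auto simp: f_coef_def split: if_splits)
  then show ?thesis
    by (simp add: Ly_def f_coef_def)
qed

lemma psd_on_singleton_iff: "psd_on {a} M \<longleftrightarrow> 0 \<le> M a a"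
proof
  assume "psd_on {a} M"
  from this[unfolded psd_on_def, rule_format, of "\<lambda>_. 1"] show "0 \<le> M a a" by simp
next
  assume "0 \<le> M a a"
  then show "psd_on {a} M"
    unfolding psd_on_def by (simp add: mult.commute[of _ "M a a"] mult.assoc)
qed

lemma psd_on_pairD:
  assumes "psd_on {a, b} M" "a \<noteq> b"
  shows "0 \<le> u\<^sup>2 * M a a + u * w * (M a b + M b a) + w\<^sup>2 * M b b"
  using assms(1)[unfolded psd_on_def, rule_format, of "\<lambda>i. if i = a then u else w"] assms(2)
  by (simp add: power2_eq_square algebra_simps)

lemma psd_on_pair_signed_rank_one:
  assumes "a \<noteq> b" "M a a = s\<^sup>2" "M b b = t\<^sup>2" "M a b = e * s * t" "M b a = e * s * t" "e\<^sup>2 = 1"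
  shows "psd_on {a, b} M"
  unfolding psd_on_def
proof
  fix v :: "_ \<Rightarrow> real"
  have "(\<Sum>i\<in>{a, b}. \<Sum>j\<in>{a, b}. v i * M i j * v j) = (v a * s + e * v b * t)\<^sup>2"
    using assms by (simp add: power2_eq_square algebra_simps)
  then show "0 \<le> (\<Sum>i\<in>{a, b}. \<Sum>j\<in>{a, b}. v i * M i j * v j)" by simp
qed

lemma psd_principal_le2I:
  assumes "\<And>a. a \<in> I \<Longrightarrow> 0 \<le> M a a"
    and "\<And>a b. a \<in> I \<Longrightarrow> b \<in> I \<Longrightarrow> a \<noteq> b \<Longrightarrow> psd_on {a, b} M"
  shows "psd_principal_le2 I M"
  unfolding psd_principal_le2_def
proof (intro allI impI)
  fix J assume J: "J \<subseteq> I \<and> finite J \<and> card J \<le> 2"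
  then consider "card J = 0" | "card J = 1" | "card J = 2" by linarith
  then show "psd_on J M"
  proof cases
    case 1
    with J show ?thesis by (simp add: psd_on_def)
  next
    case 2
    with J assms(1) show ?thesis by (auto simp: card_1_singleton_iff psd_on_singleton_iff)
  next
    case 3
    with J assms(2) show ?thesis by (auto simp: card_2_iff)
  qed
qed

lemma psd_principal_le2D:
  assumes "psd_principal_le2 I M" "a \<in> I" "b \<in> I"
  shows "psd_on {a, b} M"
proof -
  have "card {a, b} \<le> 2" by (simp add: card_insert_if)
  with assms show ?thesis by (simp add: psd_principal_le2_def)
qed

lemma pseudo_moment_moment_mat_psd: "psd_principal_le2 I (moment_mat pseudo_moment)"
proof (rule psd_principal_le2I)
  show "0 \<le> moment_mat pseudo_moment a a" for a
    by (simp add: moment_mat_def pseudo_moment_madd_self)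
  show "psd_on {a, b} (moment_mat pseudo_moment)" if "a \<noteq> b" for a b
    by (rule psd_on_pair_signed_rank_one[OF that, where e = "(-1) ^ ((fst a + fst b) * (snd a + snd b))"])
      (simp_all add: moment_mat_def pseudo_moment_madd_self pseudo_moment_madd neg_one_power_squared
        add.commute mult.commute)
qed

lemma pseudo_moment_shift:
  "pseudo_moment (i + 2, j) = pseudo_moment (i, j) * half_sqrt2\<^sup>2"
  "pseudo_moment (i, j + 2) = pseudo_moment (i, j) * half_sqrt2\<^sup>2"
proof -
  have "(-1) ^ ((i + 2) * j) = ((-1) ^ (i * j) :: real)" "(-1) ^ (i * (j + 2)) = ((-1) ^ (i * j) :: real)"
    by (simp_all add: algebra_simps power_add power_mult)
  then show "pseudo_moment (i + 2, j) = pseudo_moment (i, j) * half_sqrt2\<^sup>2"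
    "pseudo_moment (i, j + 2) = pseudo_moment (i, j) * half_sqrt2\<^sup>2"
    by (simp_all add: pseudo_moment_def mdeg_def power_add power2_eq_square)
qed

lemma loc_mat_pseudo_moment: "loc_mat pseudo_moment \<alpha> \<beta> = 0"
proof -
  obtain i j where ij: "madd \<alpha> \<beta> = (i, j)" by fastforce
  then show ?thesis
    unfolding loc_mat_def ij unfolding madd_def fst_conv snd_conv add_0_right pseudo_moment_shift
    by (simp add: half_sqrt2_sq)
qed

lemma relaxation_value_in_moment_feasible: "4 * (1 - sqrt 2) \<in> moment_feasible d"
proof -
  have "Ly pseudo_moment f_coef = 4 * (1 - sqrt 2)"
    unfolding Ly_f_coef pseudo_moment_def
    by (simp add: mdeg_def half_sqrt2_sq) (simp add: half_sqrt2_def)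
  moreover have "psd_principal_le2 I (loc_mat pseudo_moment)" for I :: "(nat \<times> nat) set"
    by (simp add: psd_principal_le2_def psd_on_def loc_mat_pseudo_moment)
  ultimately show ?thesis
    unfolding moment_feasible_def using pseudo_moment_moment_mat_psd
    by (auto simp: pseudo_moment_def mdeg_def intro!: exI[of _ pseudo_moment])
qed

lemma moment_feasible_ge:
  assumes "v \<in> moment_feasible d" "1 \<le> d"
  shows "4 * (1 - sqrt 2) \<le> v"
proof -
  obtain y where v: "v = Ly y f_coef" and y00: "y (0, 0) = 1"
    and M: "psd_principal_le2 (idx d) (moment_mat y)"
    and L: "psd_principal_le2 (idx (d - 1)) (loc_mat y)"
    using assms(1) unfolding moment_feasible_def by blast
  have idx: "(0, 0) \<in> idx d" "(1, 0) \<in> idx d" "(0, 1) \<in> idx d" "(0, 0) \<in> idx (d - 1)"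
    using assms(2) by (auto simp: idx_def mdeg_def)
  have x1: "(y (1, 0))\<^sup>2 \<le> y (2, 0)"
    using psd_on_pairD[OF psd_principal_le2D[OF M idx(1,2)], of "y (1, 0)" "-1"]
    by (simp add: moment_mat_def madd_def y00 numeral_2_eq_2 power2_eq_square)
  have x2: "(y (0, 1))\<^sup>2 \<le> y (0, 2)"
    using psd_on_pairD[OF psd_principal_le2D[OF M idx(1,3)], of "y (0, 1)" "-1"]
    by (simp add: moment_mat_def madd_def y00 numeral_2_eq_2 power2_eq_square)
  have quadratic: "0 \<le> y (2, 0) + 2 * y (1, 1) + y (0, 2)"
    using psd_on_pairD[OF psd_principal_le2D[OF M idx(2,3)], of 1 1]
    by (simp add: moment_mat_def madd_def numeral_2_eq_2)
  have "psd_on {(0, 0)} (loc_mat y)"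
    using psd_principal_le2D[OF L idx(4) idx(4)] by simp
  then have disc: "y (2, 0) + y (0, 2) \<le> 1"
    by (simp add: psd_on_singleton_iff loc_mat_def madd_def y00 numeral_2_eq_2)
  have "y (1, 0) + y (0, 1) \<le> sqrt 2"
    using x1 x2 disc by (intro add_le_sqrt2_if_sum_squares_le_1) linarith
  with quadratic show ?thesis
    unfolding v Ly_f_coef y00 by (simp add: right_diff_distrib)
qed

theorem mainTheorem2:
  shows "(\<forall>x. g x \<ge> 0 \<longrightarrow> f x \<ge> 2 * (3 - 2 * sqrt 2)) \<and>
         (\<exists>x. g x \<ge> 0 \<and> f x = 2 * (3 - 2 * sqrt 2)) \<and>
         (\<forall>d::nat. d \<ge> 1 \<longrightarrow>
            sdsos_feasible d \<noteq> {} \<and> bdd_above (sdsos_feasible d) \<and>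
            Sup (sdsos_feasible d) = 4 * (1 - sqrt 2) \<and>
            moment_feasible d \<noteq> {} \<and> bdd_below (moment_feasible d) \<and>
            Inf (moment_feasible d) = 4 * (1 - sqrt 2)) \<and>
         4 * (1 - sqrt 2) < 2 * (3 - 2 * sqrt 2) \<and>
         2 * (3 - 2 * sqrt 2) - 4 * (1 - sqrt 2) = 2"
proof (intro conjI allI impI)
  show "\<And>x. 0 \<le> g x \<Longrightarrow> 2 * (3 - 2 * sqrt 2) \<le> f x"
    by (rule f_ge_on_disc)
  show "\<exists>x. 0 \<le> g x \<and> f x = 2 * (3 - 2 * sqrt 2)"
    using g_half_sqrt2_signs(1) f_half_sqrt2 by force
  fix d :: nat
  assume d: "1 \<le> d"
  show "sdsos_feasible d \<noteq> {}" "bdd_above (sdsos_feasible d)"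
    using relaxation_value_in_sdsos_feasible[OF d] sdsos_feasible_le by (auto simp: bdd_above_def)
  show "Sup (sdsos_feasible d) = 4 * (1 - sqrt 2)"
    using relaxation_value_in_sdsos_feasible[OF d] sdsos_feasible_le by (intro cSup_eq_maximum) auto
  show "moment_feasible d \<noteq> {}" "bdd_below (moment_feasible d)"
    using relaxation_value_in_moment_feasible moment_feasible_ge[OF _ d] by (auto simp: bdd_below_def)
  show "Inf (moment_feasible d) = 4 * (1 - sqrt 2)"
    using relaxation_value_in_moment_feasible moment_feasible_ge[OF _ d] by (intro cInf_eq_minimum) auto
next
  show "4 * (1 - sqrt 2) < 2 * (3 - 2 * sqrt 2)"
    using sqrt2_less_2 by simp
  show "2 * (3 - 2 * sqrt 2) - 4 * (1 - sqrt 2) = 2"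
    by simp
qed

end
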